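(* Let $\lambda\neq\mu$ be partitions of $n$. Then the irreducible $S_n$-representations $V_\lambda$ and $V_\mu$ have different sign signatures.
   Context: $V_\lambda$ is the irreducible complex representation of $S_n$ indexed by the partition $\lambda$ in the standard way ($V_{[1,\dots,1]}$ the sign representation). The sign signature of a representation $V$ of $S_n$ is the set of parabolic subgroups $P$ (subgroups generated by subsets of the simple transpositions $(i,i+1)$, i.e. products $S_{p_1}\times\cdots\times S_{p_k}$ of symmetric groups on consecutive blocks of indices) such that $\dim\operatorname{Hom}_P(\operatorname{sgn}_P,V)>0$, where $\operatorname{sgn}_P$ is the sign representation of $P$. *)

theory Defs
  imports Complex_Main "HOL-Combinatorics.Combinatorics"
begin

text \<open>S_n acts on {0..<n}; permutations are functions nat => nat permuting {0..<n}.\<close>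

definition is_partition :: "nat \<Rightarrow> nat list \<Rightarrow> bool" where
  "is_partition n la \<longleftrightarrow> sorted_wrt (\<ge>) la \<and> 0 \<notin> set la \<and> sum_list la = n"

definition cells :: "nat list \<Rightarrow> (nat \<times> nat) set" where
  "cells la = {(i, j). i < length la \<and> j < la ! i}"

definition tableaux :: "nat \<Rightarrow> nat list \<Rightarrow> (nat \<times> nat \<Rightarrow> nat) set" where
  "tableaux n la = {t. bij_betw t (cells la) {0..<n}}"

text \<open>A tabloid is encoded as a row-assignment function T :: nat => nat
  (element x lies in row T x; T x = 0 for x >= n).
  The row tabloid {t} of a tableau t.\<close>
definition row_tabloid :: "nat \<Rightarrow> nat list \<Rightarrow> (nat \<times> nat \<Rightarrow> nat) \<Rightarrow> nat \<Rightarrow> nat" where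
  "row_tabloid n la t = (\<lambda>x. if x < n then fst (inv_into (cells la) t x) else 0)"

definition col_group :: "nat \<Rightarrow> nat list \<Rightarrow> (nat \<times> nat \<Rightarrow> nat) \<Rightarrow> (nat \<Rightarrow> nat) set" where
  "col_group n la t = {p. p permutes {0..<n} \<and>
      (\<forall>x<n. snd (inv_into (cells la) t (p x)) = snd (inv_into (cells la) t x))}"

text \<open>Permutation action on the permutation module M^la (functions on tabloids):
  sigma . T = T o inv sigma, hence (sigma . f) T = f (T o sigma).\<close>
definition perm_act :: "(nat \<Rightarrow> nat) \<Rightarrow> ((nat \<Rightarrow> nat) \<Rightarrow> complex) \<Rightarrow> ((nat \<Rightarrow> nat) \<Rightarrow> complex)" where
  "perm_act s f = (\<lambda>T. f (T \<circ> s))"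

definition polytabloid :: "nat \<Rightarrow> nat list \<Rightarrow> (nat \<times> nat \<Rightarrow> nat) \<Rightarrow> (nat \<Rightarrow> nat) \<Rightarrow> complex" where
  "polytabloid n la t = (\<lambda>T. \<Sum>p\<in>col_group n la t.
      of_int (sign p) * (if T = row_tabloid n la t \<circ> inv p then 1 else 0))"

text \<open>Specht module S^la = complex span of the polytabloids; this is V_la
  in the standard indexing (S^(n) trivial, S^(1^n) sign).\<close>
definition specht :: "nat \<Rightarrow> nat list \<Rightarrow> ((nat \<Rightarrow> nat) \<Rightarrow> complex) set" where
  "specht n la = {v. \<exists>S c. finite S \<and> S \<subseteq> tableaux n la \<and>
      v = (\<lambda>T. \<Sum>t\<in>S. c t * polytabloid n la t T)}"

text \<open>Parabolic subgroup generated by simple transpositions (i, i+1), i in J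
  (0-indexed, Suc i < n). Closure under composition suffices in a finite group.\<close>
inductive_set parabolic :: "nat set \<Rightarrow> (nat \<Rightarrow> nat) set" for J where
  par_id: "id \<in> parabolic J"
| par_step: "p \<in> parabolic J \<Longrightarrow> i \<in> J \<Longrightarrow> transpose i (Suc i) \<circ> p \<in> parabolic J"

text \<open>Sign signature: parabolic P with Hom_P(sgn_P, V) nonzero, i.e. V contains a
  nonzero vector on which P acts by the sign character.\<close>
definition sign_signature :: "nat \<Rightarrow> ((nat \<Rightarrow> nat) \<Rightarrow> complex) set \<Rightarrow> (nat \<Rightarrow> nat) set set" where
  "sign_signature n V = {parabolic J | J. J \<subseteq> {i. Suc i < n} \<and>
      (\<exists>v\<in>V. v \<noteq> (\<lambda>T. 0) \<and> (\<forall>s\<in>parabolic J. perm_act s v = (\<lambda>T. of_int (sign s) * v T)))}"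

end

theory Submission
  imports Defs
begin

text \<open>Let \<open>T\<^sup>\<lambda>\<close> be the tableau of shape \<open>\<lambda>\<close> filled column by column, and \<open>P\<^sub>\<lambda>\<close> the
  parabolic subgroup generated by the simple transpositions inside its columns. Then \<open>P\<^sub>\<lambda>\<close>
  lies in the column stabiliser of \<open>T\<^sup>\<lambda>\<close>, so it acts on the polytabloid \<open>e\<^bsub>T\<^sup>\<lambda>\<^esub>\<close>
  by the sign character and \<open>P\<^sub>\<lambda>\<close> belongs to the sign signature of \<open>V\<^sub>\<lambda>\<close>.

  Conversely, let \<open>v \<noteq> 0\<close> in \<open>V\<^sub>\<mu>\<close> transform by the sign character of \<open>P\<^sub>\<lambda>\<close>. A
  \<open>\<mu>\<close>-tabloid \<open>T\<close> with \<open>v(T) \<noteq> 0\<close> cannot have two entries of one column of \<open>T\<^sup>\<lambda>\<close> in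
  the same row: the transposition swapping them fixes \<open>T\<close> but negates \<open>v\<close>. Hence the
  \<open>\<lambda>'\<^sub>1 + \<dots> + \<lambda>'\<^sub>k\<close> entries of the first \<open>k\<close> columns of \<open>T\<^sup>\<lambda>\<close> occupy at most
  \<open>min \<mu>\<^sub>r k\<close> places in row \<open>r\<close> of \<open>T\<close>, which gives
  \<open>\<lambda>'\<^sub>1 + \<dots> + \<lambda>'\<^sub>k \<le> \<Sum>\<^sub>r min \<mu>\<^sub>r k = \<mu>'\<^sub>1 + \<dots> + \<mu>'\<^sub>k\<close>, where \<open>\<lambda>'\<close> is the
  conjugate partition. Equal signatures therefore force \<open>\<lambda>' = \<mu>'\<close>, i.e. \<open>\<lambda> = \<mu>\<close>.\<close>

section \<open>Polytabloids\<close>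

lemma col_group_comp:
  assumes "s \<in> col_group n la t" "p \<in> col_group n la t"
  shows "s \<circ> p \<in> col_group n la t"
proof -
  have perms: "s permutes {0..<n}" "p permutes {0..<n}"
    using assms by (auto simp: col_group_def)
  have "p x < n" if "x < n" for x
    using permutes_in_image[OF perms(2)] that by auto
  then show ?thesis
    using assms perms by (auto simp: col_group_def permutes_compose)
qed

lemma col_group_inv:
  assumes s: "s \<in> col_group n la t"
  shows "inv s \<in> col_group n la t"
proof -
  have s_perm: "s permutes {0..<n}" using s by (simp add: col_group_def)
  have "snd (inv_into (cells la) t (inv s x)) = snd (inv_into (cells la) t x)" if "x < n" for x
  proof -
    have "inv s x < n" using permutes_in_image[OF permutes_inv[OF s_perm]] that by auto
    then show ?thesis
      using s by (auto simp: col_group_def permutes_inverses(1)[OF s_perm])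
  qed
  then show ?thesis using permutes_inv[OF s_perm] by (simp add: col_group_def)
qed

lemma finite_col_group: "finite (col_group n la t)"
  by (rule finite_subset[OF _ finite_permutations[of "{0..<n}"]]) (auto simp: col_group_def)

lemma perm_act_polytabloid:
  assumes s: "s \<in> col_group n la t"
  shows "perm_act s (polytabloid n la t) = (\<lambda>T. of_int (sign s) * polytabloid n la t T)"
proof
  fix T :: "nat \<Rightarrow> nat"
  let ?C = "col_group n la t" and ?R = "row_tabloid n la t"
  have s_perm: "s permutes {0..<n}" using s by (simp add: col_group_def)
  have shift: "T \<circ> s = ?R \<circ> inv p \<longleftrightarrow> T = ?R \<circ> inv (s \<circ> p)" if "p \<in> ?C" for p
  proof -
    have "inv (s \<circ> p) = inv p \<circ> inv s"
      using that s_perm by (intro o_inv_distrib) (auto simp: col_group_def permutes_bij)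
    moreover have "T \<circ> s = X \<longleftrightarrow> T = X \<circ> inv s" for X
      using permutes_inv_o[OF s_perm] by (auto simp flip: o_assoc)
    ultimately show ?thesis by (simp add: o_assoc)
  qed
  have sign_shift: "sign s * sign (s \<circ> p) = sign p" if "p \<in> ?C" for p
  proof -
    have "permutation s" "permutation p"
      using s that by (auto simp: col_group_def permutation_permutes)
    then show ?thesis by (simp add: sign_compose mult.assoc[symmetric])
  qed
  have "perm_act s (polytabloid n la t) T
      = (\<Sum>p\<in>?C. of_int (sign p) * (if T = ?R \<circ> inv (s \<circ> p) then 1 else 0))"
    unfolding perm_act_def polytabloid_def by (intro sum.cong refl) (simp add: shift)
  also have "\<dots> = (\<Sum>q\<in>?C. of_int (sign s * sign q) * (if T = ?R \<circ> inv q then 1 else 0))"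
  proof (rule sum.reindex_bij_witness[where i = "\<lambda>q. inv s \<circ> q" and j = "\<lambda>p. s \<circ> p"])
    fix q assume "q \<in> ?C"
    then show "inv s \<circ> q \<in> ?C" by (intro col_group_comp col_group_inv s)
    show "s \<circ> (inv s \<circ> q) = q" using permutes_inv_o(1)[OF s_perm] by (simp add: o_assoc)
  next
    fix p assume p: "p \<in> ?C"
    then show "s \<circ> p \<in> ?C" by (intro col_group_comp s)
    show "inv s \<circ> (s \<circ> p) = p" using permutes_inv_o(2)[OF s_perm] by (simp add: o_assoc)
    show "of_int (sign s * sign (s \<circ> p)) * (if T = ?R \<circ> inv (s \<circ> p) then 1 else 0)
        = of_int (sign p) * (if T = ?R \<circ> inv (s \<circ> p) then 1 else (0::complex))"
      using sign_shift[OF p] by simp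
  qed
  also have "\<dots> = of_int (sign s) * polytabloid n la t T"
    by (simp add: polytabloid_def sum_distrib_left mult.assoc)
  finally show "perm_act s (polytabloid n la t) T = of_int (sign s) * polytabloid n la t T" .
qed

lemma col_group_stabilising_row_tabloid:
  assumes t: "bij_betw t (cells la) {0..<n}" and p: "p \<in> col_group n la t"
    and fix_rows: "row_tabloid n la t \<circ> p = row_tabloid n la t"
  shows "p = id"
proof
  fix x
  have p_perm: "p permutes {0..<n}" using p by (simp add: col_group_def)
  show "p x = id x"
  proof (cases "x < n")
    case True
    let ?cell = "inv_into (cells la) t"
    have px: "p x < n" using permutes_in_image[OF p_perm] True by simp
    have "fst (?cell (p x)) = fst (?cell x)"
      using fun_cong[OF fix_rows, of x] True px by (simp add: row_tabloid_def)
    moreover have "snd (?cell (p x)) = snd (?cell x)"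
      using p True by (simp add: col_group_def)
    ultimately have "?cell (p x) = ?cell x" by (simp add: prod_eq_iff)
    moreover have "p x \<in> t ` cells la" "x \<in> t ` cells la"
      using t px True by (auto simp: bij_betw_def)
    ultimately show ?thesis by (simp add: inv_into_injective)
  next
    case False
    then show ?thesis using p_perm by (simp add: permutes_not_in)
  qed
qed

lemma polytabloid_row_tabloid:
  assumes t: "bij_betw t (cells la) {0..<n}"
  shows "polytabloid n la t (row_tabloid n la t) = 1"
proof -
  let ?C = "col_group n la t" and ?R = "row_tabloid n la t"
  have "?R = ?R \<circ> inv p \<longleftrightarrow> p = id" if p: "p \<in> ?C" for p
  proof
    assume "?R = ?R \<circ> inv p"
    then have "?R \<circ> p = ?R \<circ> (inv p \<circ> p)" by (simp add: o_assoc)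
    also have "\<dots> = ?R"
      using p permutes_inv_o(2)[of p "{0..<n}"] by (simp add: col_group_def)
    finally have "?R \<circ> p = ?R" .
    then show "p = id" by (rule col_group_stabilising_row_tabloid[OF t p])
  qed simp
  then have "polytabloid n la t ?R = (\<Sum>p\<in>?C. if p = id then 1 else 0)"
    unfolding polytabloid_def by (intro sum.cong) auto
  also have "\<dots> = 1"
    using finite_col_group permutes_id by (simp add: sum.delta col_group_def)
  finally show ?thesis .
qed

lemma row_tabloid_comp_inv:
  assumes t: "bij_betw t (cells la) {0..<n}" and p: "p permutes {0..<n}"
  shows "row_tabloid n la t \<circ> inv p = row_tabloid n la (p \<circ> t)"
proof
  fix x
  show "(row_tabloid n la t \<circ> inv p) x = row_tabloid n la (p \<circ> t) x"
  proof (cases "x < n")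
    case True
    have ipx: "inv p x \<in> t ` cells la"
      using t permutes_in_image[OF permutes_inv[OF p]] True by (auto simp: bij_betw_def)
    have "inv_into (cells la) (p \<circ> t) x = inv_into (cells la) t (inv p x)"
    proof (rule inv_into_f_eq)
      show "inj_on (p \<circ> t) (cells la)"
        using t p by (auto simp: bij_betw_def permutes_inj_on intro: comp_inj_on inj_on_subset)
      show "inv_into (cells la) t (inv p x) \<in> cells la" by (rule inv_into_into[OF ipx])
      show "(p \<circ> t) (inv_into (cells la) t (inv p x)) = x"
        using ipx by (simp add: f_inv_into_f permutes_inverses(1)[OF p])
    qed
    moreover have "inv p x < n" using permutes_in_image[OF permutes_inv[OF p]] True by simp
    ultimately show ?thesis using True by (simp add: row_tabloid_def)
  next
    case False
    then show ?thesis
      using permutes_not_in[OF permutes_inv[OF p]] by (simp add: row_tabloid_def)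
  qed
qed

lemma specht_support:
  assumes "v \<in> specht n mu" and "v T \<noteq> 0"
  obtains t where "t \<in> tableaux n mu" and "T = row_tabloid n mu t"
proof -
  obtain S c where S: "S \<subseteq> tableaux n mu" and v: "v = (\<lambda>T. \<Sum>t\<in>S. c t * polytabloid n mu t T)"
    using assms(1) by (auto simp: specht_def)
  have "\<exists>t\<in>S. polytabloid n mu t T \<noteq> 0"
  proof (rule ccontr)
    assume "\<not> ?thesis"
    then have "v T = 0" by (simp add: v)
    then show False using assms(2) by simp
  qed
  then obtain t where t: "t \<in> S" and poly_T: "polytabloid n mu t T \<noteq> 0" by blast
  have "\<exists>p\<in>col_group n mu t. T = row_tabloid n mu t \<circ> inv p"
  proof (rule ccontr)
    assume "\<not> ?thesis"
    then have "polytabloid n mu t T = 0" by (simp add: polytabloid_def)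
    then show False using poly_T by simp
  qed
  then obtain p where p: "p \<in> col_group n mu t" and T: "T = row_tabloid n mu t \<circ> inv p"
    by blast
  have t_bij: "bij_betw t (cells mu) {0..<n}" using t S by (auto simp: tableaux_def)
  have p_perm: "p permutes {0..<n}" using p by (simp add: col_group_def)
  show thesis
  proof
    show "p \<circ> t \<in> tableaux n mu"
      using bij_betw_trans[OF t_bij permutes_imp_bij[OF p_perm]] by (simp add: tableaux_def)
    show "T = row_tabloid n mu (p \<circ> t)" using row_tabloid_comp_inv[OF t_bij p_perm] T by simp
  qed
qed

lemma row_tabloid_less_length:
  assumes "bij_betw t (cells la) {0..<n}" and "x < n"
  shows "row_tabloid n la t x < length la"
proof -
  have "inv_into (cells la) t x \<in> cells la"
    using assms by (intro inv_into_into) (auto simp: bij_betw_def)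
  then show ?thesis using assms(2) by (auto simp: row_tabloid_def cells_def split: prod.splits)
qed

lemma card_row_tabloid_row_le:
  assumes t: "bij_betw t (cells la) {0..<n}"
  shows "card {x. x < n \<and> row_tabloid n la t x = r} \<le> la ! r"
proof -
  have "{x. x < n \<and> row_tabloid n la t x = r} \<subseteq> t ` ({r} \<times> {..<la ! r})"
  proof
    fix x assume "x \<in> {x. x < n \<and> row_tabloid n la t x = r}"
    then have x: "x < n" "row_tabloid n la t x = r" by simp_all
    let ?c = "inv_into (cells la) t x"
    have "?c \<in> cells la" "t ?c = x"
      using t x by (auto simp: bij_betw_inv_into_right intro: bij_betw_apply[OF bij_betw_inv_into])
    moreover have "fst ?c = r" using x by (simp add: row_tabloid_def)
    ultimately show "x \<in> t ` ({r} \<times> {..<la ! r})"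
      by (cases ?c) (force simp: cells_def)
  qed
  then have "card {x. x < n \<and> row_tabloid n la t x = r} \<le> card (t ` ({r} \<times> {..<la ! r}))"
    by (rule card_mono[rotated]) simp
  also have "\<dots> \<le> la ! r"
    using card_image_le[of "{r} \<times> {..<la ! r}" t] by (simp add: card_cartesian_product_singleton)
  finally show ?thesis .
qed

section \<open>The column tableau\<close>

definition col_length :: "nat list \<Rightarrow> nat \<Rightarrow> nat" where
  "col_length la j = card {i. i < length la \<and> j < la ! i}"

definition col_prefix_sum :: "nat list \<Rightarrow> nat \<Rightarrow> nat" where
  "col_prefix_sum la k = (\<Sum>j<k. col_length la j)"

definition col_tableau :: "nat list \<Rightarrow> nat \<times> nat \<Rightarrow> nat" where
  "col_tableau la = (\<lambda>(i, j). col_prefix_sum la j + i)"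

definition col_index :: "nat list \<Rightarrow> nat \<Rightarrow> nat" where
  "col_index la x = snd (inv_into (cells la) (col_tableau la) x)"

definition col_gens :: "nat \<Rightarrow> nat list \<Rightarrow> nat set" where
  "col_gens n la = {i. Suc i < n \<and> col_index la i = col_index la (Suc i)}"

lemma down_closed_eq_lessThan_card:
  fixes S :: "nat set"
  assumes fin: "finite S" and down: "\<And>i i'. i \<in> S \<Longrightarrow> i' \<le> i \<Longrightarrow> i' \<in> S"
  shows "S = {..<card S}"
proof (intro set_eqI iffI)
  fix i assume "i \<in> S"
  then have "{..i} \<subseteq> S" using down by auto
  then have "card {..i} \<le> card S" by (rule card_mono[OF fin])
  then show "i \<in> {..<card S}" by simp
next
  fix i assume i: "i \<in> {..<card S}"
  show "i \<in> S"
  proof (rule ccontr)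
    assume "i \<notin> S"
    then have "S \<subseteq> {..<i}" using down by (meson lessThan_iff not_le subsetI)
    then have "card S \<le> i" using card_mono[of "{..<i}" S] by simp
    then show False using i by simp
  qed
qed

lemma col_length_less_iff:
  assumes "sorted_wrt (\<ge>) la"
  shows "i < col_length la j \<longleftrightarrow> i < length la \<and> j < la ! i"
proof -
  let ?S = "{i. i < length la \<and> j < la ! i}"
  have "?S = {..<card ?S}"
  proof (rule down_closed_eq_lessThan_card)
    show "i' \<in> ?S" if "i \<in> ?S" "i' \<le> i" for i i'
      using that sorted_wrt_nth_less[OF assms, of i' i] by (cases "i' = i") auto
  qed simp
  from eqset_imp_iff[OF this, of i] show ?thesis unfolding col_length_def by simp
qed

lemma col_prefix_sum_Suc: "col_prefix_sum la (Suc k) = col_prefix_sum la k + col_length la k"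
  by (simp add: col_prefix_sum_def)

lemma col_prefix_sum_mono: "k \<le> k' \<Longrightarrow> col_prefix_sum la k \<le> col_prefix_sum la k'"
  unfolding col_prefix_sum_def by (rule sum_mono2) auto

lemma col_prefix_sum_eq_sum_min: "col_prefix_sum la k = (\<Sum>i<length la. min (la ! i) k)"
proof (induction k)
  case 0
  then show ?case by (simp add: col_prefix_sum_def)
next
  case (Suc k)
  have "(\<Sum>i<length la. min (la ! i) (Suc k))
      = (\<Sum>i<length la. min (la ! i) k) + (\<Sum>i<length la. if k < la ! i then 1 else 0)"
    by (subst sum.distrib[symmetric]) (auto intro: sum.cong)
  also have "(\<Sum>i<length la. if k < la ! i then 1 else 0) = col_length la k"
    by (simp add: sum.If_cases col_length_def lessThan_def Collect_conj_eq[symmetric])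
  finally show ?case using Suc by (simp add: col_prefix_sum_Suc)
qed

lemma partition_sum_nth:
  assumes "is_partition n la"
  shows "(\<Sum>i<length la. la ! i) = n"
  using assms by (simp add: is_partition_def sum_list_sum_nth atLeast0LessThan)

lemma col_prefix_sum_le:
  assumes "is_partition n la"
  shows "col_prefix_sum la k \<le> n"
proof -
  have "col_prefix_sum la k \<le> (\<Sum>i<length la. la ! i)"
    unfolding col_prefix_sum_eq_sum_min by (rule sum_mono) simp
  then show ?thesis using partition_sum_nth[OF assms] by simp
qed

lemma card_cells:
  assumes "is_partition n la"
  shows "card (cells la) = n"
proof -
  have "cells la = (SIGMA i:{..<length la}. {..<la ! i})" by (auto simp: cells_def)
  then show ?thesis using partition_sum_nth[OF assms] by simp
qed

lemma col_tableau_bounds: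
  assumes "sorted_wrt (\<ge>) la" and "(i, j) \<in> cells la"
  shows "col_prefix_sum la j \<le> col_tableau la (i, j)"
    and "col_tableau la (i, j) < col_prefix_sum la (Suc j)"
  using assms col_length_less_iff[OF assms(1), of i j]
  by (auto simp: col_tableau_def col_prefix_sum_Suc cells_def)

lemma col_tableau_bij:
  assumes la: "is_partition n la"
  shows "bij_betw (col_tableau la) (cells la) {0..<n}"
proof -
  have sorted: "sorted_wrt (\<ge>) la" using la by (simp add: is_partition_def)
  have inj: "inj_on (col_tableau la) (cells la)"
  proof (rule inj_onI, clarify)
    fix i j i' j'
    assume c: "(i, j) \<in> cells la" "(i', j') \<in> cells la"
      and eq: "col_tableau la (i, j) = col_tableau la (i', j')"
    have less: "col_tableau la (i, j) < col_tableau la (i', j')"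
      if "(i, j) \<in> cells la" "(i', j') \<in> cells la" "j < j'" for i j i' j'
    proof -
      have "col_tableau la (i, j) < col_prefix_sum la (Suc j)"
        by (rule col_tableau_bounds(2)[OF sorted that(1)])
      also have "\<dots> \<le> col_prefix_sum la j'" using that(3) by (intro col_prefix_sum_mono) simp
      also have "\<dots> \<le> col_tableau la (i', j')" by (rule col_tableau_bounds(1)[OF sorted that(2)])
      finally show ?thesis .
    qed
    have "j = j'"
      using less[OF c] less[OF c(2,1)] eq by (cases j j' rule: linorder_cases) auto
    then show "i = i' \<and> j = j'" using eq by (simp add: col_tableau_def)
  qed
  have "col_tableau la ` cells la \<subseteq> {0..<n}"
  proof
    fix x assume "x \<in> col_tableau la ` cells la"
    then obtain i j where "(i, j) \<in> cells la" "x = col_tableau la (i, j)" by auto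
    then have "x < col_prefix_sum la (Suc j)" using col_tableau_bounds(2)[OF sorted] by simp
    then show "x \<in> {0..<n}" using col_prefix_sum_le[OF la, of "Suc j"] by simp
  qed
  moreover have "card (col_tableau la ` cells la) = card {0..<n}"
    using card_image[OF inj] card_cells[OF la] by simp
  ultimately show ?thesis
    using inj by (simp add: bij_betw_def card_subset_eq)
qed

lemma col_index_bounds:
  assumes la: "is_partition n la" and x: "x < n"
  shows "col_prefix_sum la (col_index la x) \<le> x"
    and "x < col_prefix_sum la (Suc (col_index la x))"
proof -
  have sorted: "sorted_wrt (\<ge>) la" using la by (simp add: is_partition_def)
  let ?c = "inv_into (cells la) (col_tableau la) x"
  have "?c \<in> cells la" "col_tableau la ?c = x"
    using col_tableau_bij[OF la] x
    by (auto simp: bij_betw_inv_into_right intro: bij_betw_apply[OF bij_betw_inv_into])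
  then show "col_prefix_sum la (col_index la x) \<le> x"
    and "x < col_prefix_sum la (Suc (col_index la x))"
    using col_tableau_bounds[OF sorted, of "fst ?c" "snd ?c"] by (simp_all add: col_index_def)
qed

lemma col_index_mono:
  assumes la: "is_partition n la" and "x \<le> y" "y < n"
  shows "col_index la x \<le> col_index la y"
proof (rule ccontr)
  assume "\<not> ?thesis"
  then have "col_prefix_sum la (Suc (col_index la y)) \<le> col_prefix_sum la (col_index la x)"
    by (intro col_prefix_sum_mono) simp
  then show False
    using col_index_bounds[OF la, of x] col_index_bounds[OF la, of y] assms by linarith
qed

lemma col_index_less:
  assumes la: "is_partition n la" and "x < col_prefix_sum la k"
  shows "col_index la x < k"
proof (rule ccontr)
  assume "\<not> ?thesis"
  then have "col_prefix_sum la k \<le> col_prefix_sum la (col_index la x)"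
    by (intro col_prefix_sum_mono) simp
  moreover have "x < n" using assms col_prefix_sum_le[OF la, of k] by simp
  ultimately show False using col_index_bounds[OF la, of x] assms by linarith
qed

lemma col_gens_interval:
  assumes la: "is_partition n la" and x: "a \<le> x" "x < b" and b: "b < n"
    and same_col: "col_index la a = col_index la b"
  shows "x \<in> col_gens n la"
proof -
  have "col_index la a \<le> col_index la x" "col_index la x \<le> col_index la (Suc x)"
    "col_index la (Suc x) \<le> col_index la b"
    using col_index_mono[OF la] x b by simp_all
  then show ?thesis using x b same_col by (simp add: col_gens_def)
qed

section \<open>Sign signatures\<close>

lemma parabolic_comp: "p \<in> parabolic J \<Longrightarrow> q \<in> parabolic J \<Longrightarrow> p \<circ> q \<in> parabolic J"
proof (induction p rule: parabolic.induct)
  case par_id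
  then show ?case by simp
next
  case (par_step p i)
  then have "transpose i (Suc i) \<circ> (p \<circ> q) \<in> parabolic J" by (intro parabolic.par_step)
  then show ?case by (simp only: o_assoc)
qed

lemma transpose_in_parabolic:
  assumes "a < b" and "\<And>x. a \<le> x \<Longrightarrow> x < b \<Longrightarrow> x \<in> J"
  shows "transpose a b \<in> parabolic J"
  using assms
proof (induction b)
  case 0
  then show ?case by simp
next
  case (Suc b)
  have adjacent: "transpose b (Suc b) \<in> parabolic J"
    using parabolic.par_step[OF parabolic.par_id, of b J] Suc.prems by simp
  show ?case
  proof (cases "a = b")
    case True
    then show ?thesis using adjacent by simp
  next
    case False
    then have "a < b" using Suc.prems by simp
    then have "transpose a (Suc b) = transpose b (Suc b) \<circ> transpose a b \<circ> transpose b (Suc b)"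
      by (auto simp: fun_eq_iff transpose_def)
    moreover have "transpose a b \<in> parabolic J" using Suc \<open>a < b\<close> by simp
    ultimately show ?thesis using adjacent by (metis parabolic_comp)
  qed
qed

lemma parabolic_col_gens_subset_col_group:
  "parabolic (col_gens n la) \<subseteq> col_group n la (col_tableau la)"
proof
  fix s assume "s \<in> parabolic (col_gens n la)"
  then show "s \<in> col_group n la (col_tableau la)"
  proof (induction s rule: parabolic.induct)
    case par_id
    then show ?case using permutes_id[of "{0..<n}"] by (simp add: col_group_def id_def)
  next
    case (par_step q i)
    then have i: "Suc i < n" "col_index la i = col_index la (Suc i)" by (auto simp: col_gens_def)
    have "transpose i (Suc i) permutes {0..<n}" using i by (intro permutes_swap_id) auto
    moreover have "col_index la (transpose i (Suc i) x) = col_index la x" for x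
      using i by (auto simp: transpose_def)
    ultimately have "transpose i (Suc i) \<in> col_group n la (col_tableau la)"
      by (simp add: col_group_def col_index_def)
    then show ?case by (rule col_group_comp[OF _ par_step.IH])
  qed
qed

lemma parabolic_col_gens_mem_sign_signature:
  assumes la: "is_partition n la"
  shows "parabolic (col_gens n la) \<in> sign_signature n (specht n la)"
proof -
  let ?v = "polytabloid n la (col_tableau la)"
  have bij: "bij_betw (col_tableau la) (cells la) {0..<n}" by (rule col_tableau_bij[OF la])
  have "?v \<in> specht n la"
    unfolding specht_def using bij
    by (intro CollectI exI[of _ "{col_tableau la}"] exI[of _ "\<lambda>_. 1"]) (simp add: tableaux_def)
  moreover have "?v \<noteq> (\<lambda>T. 0)" using polytabloid_row_tabloid[OF bij] by (metis zero_neq_one)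
  moreover have "\<forall>s\<in>parabolic (col_gens n la). perm_act s ?v = (\<lambda>T. of_int (sign s) * ?v T)"
    using perm_act_polytabloid parabolic_col_gens_subset_col_group by blast
  moreover have "col_gens n la \<subseteq> {i. Suc i < n}" by (auto simp: col_gens_def)
  ultimately show ?thesis unfolding sign_signature_def by blast
qed

lemma sign_vector_separates:
  assumes "perm_act (transpose a b) v = (\<lambda>T. of_int (sign (transpose a b)) * v T)"
    and "a \<noteq> b" and "v T \<noteq> 0"
  shows "T a \<noteq> T b"
proof
  assume "T a = T b"
  then have "T \<circ> transpose a b = T" by (auto simp: fun_eq_iff transpose_def)
  then have "v T = - v T"
    using fun_cong[OF assms(1), of T] assms(2) by (simp add: perm_act_def sign_swap_id)
  then show False using assms(3) by simp
qed

lemma sign_vector_separates_col_blocks: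
  assumes la: "is_partition n la"
    and sgn: "\<forall>s\<in>parabolic (col_gens n la). perm_act s v = (\<lambda>T. of_int (sign s) * v T)"
    and "v T \<noteq> 0" and ab: "a < b" "b < n" and "col_index la a = col_index la b"
  shows "T a \<noteq> T b"
proof -
  have "transpose a b \<in> parabolic (col_gens n la)"
    using col_gens_interval[OF la _ _ ab(2) \<open>col_index la a = col_index la b\<close>]
    by (intro transpose_in_parabolic[OF ab(1)])
  then show ?thesis using sign_vector_separates sgn \<open>v T \<noteq> 0\<close> ab(1) by blast
qed

lemma card_le_sum_min_by_rows:
  fixes A :: "'a set" and row col :: "'a \<Rightarrow> nat" and m :: "nat \<Rightarrow> nat"
  assumes "finite A" and rows: "row ` A \<subseteq> {..<R}" and cols: "col ` A \<subseteq> {..<k}"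
    and row_card: "\<And>r. card {x\<in>A. row x = r} \<le> m r"
    and col_inj: "\<And>r. inj_on col {x\<in>A. row x = r}"
  shows "card A \<le> (\<Sum>r<R. min (m r) k)"
proof -
  have "A = (\<Union>r<R. {x\<in>A. row x = r})" using rows by auto
  then have "card A \<le> (\<Sum>r<R. card {x\<in>A. row x = r})"
    by (metis card_UN_le finite_lessThan)
  also have "\<dots> \<le> (\<Sum>r<R. min (m r) k)"
  proof (rule sum_mono)
    fix r
    have "card {x\<in>A. row x = r} \<le> card {..<k}"
      using cols by (intro card_inj_on_le[OF col_inj]) auto
    then show "card {x\<in>A. row x = r} \<le> min (m r) k" using row_card[of r] by simp
  qed
  finally show ?thesis .
qed

lemma col_prefix_sum_le_if_mem_sign_signature:
  assumes la: "is_partition n la"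
    and mem: "parabolic (col_gens n la) \<in> sign_signature n (specht n mu)"
  shows "col_prefix_sum la k \<le> col_prefix_sum mu k"
proof -
  obtain v where v: "v \<in> specht n mu" "v \<noteq> (\<lambda>T. 0)"
    and sgn: "\<forall>s\<in>parabolic (col_gens n la). perm_act s v = (\<lambda>T. of_int (sign s) * v T)"
    using mem unfolding sign_signature_def by auto
  obtain T where vT: "v T \<noteq> 0" using v(2) by auto
  then obtain t where t: "t \<in> tableaux n mu" and T: "T = row_tabloid n mu t"
    using specht_support[OF v(1)] by blast
  have t_bij: "bij_betw t (cells mu) {0..<n}" using t by (simp add: tableaux_def)
  note separate = sign_vector_separates_col_blocks[OF la sgn vT]
  let ?m = "col_prefix_sum la k"
  have m_le: "?m \<le> n" by (rule col_prefix_sum_le[OF la])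
  have "?m = card {..<?m}" by simp
  also have "\<dots> \<le> (\<Sum>r<length mu. min (mu ! r) k)"
  proof (rule card_le_sum_min_by_rows[where row = T and col = "col_index la"])
    show "T ` {..<?m} \<subseteq> {..<length mu}"
      using row_tabloid_less_length[OF t_bij] m_le T by auto
    show "col_index la ` {..<?m} \<subseteq> {..<k}" using col_index_less[OF la] by auto
    show "card {x\<in>{..<?m}. T x = r} \<le> mu ! r" for r
    proof -
      have "card {x\<in>{..<?m}. T x = r} \<le> card {x. x < n \<and> T x = r}"
        by (rule card_mono) (use m_le in auto)
      then show ?thesis using card_row_tabloid_row_le[OF t_bij, of r] T by simp
    qed
    show "inj_on (col_index la) {x\<in>{..<?m}. T x = r}" for r
    proof (rule inj_onI)
      fix x y assume "x \<in> {x\<in>{..<?m}. T x = r}" "y \<in> {x\<in>{..<?m}. T x = r}"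
        and "col_index la x = col_index la y"
      then show "x = y"
        using separate[of x y] separate[of y x] m_le by (cases x y rule: linorder_cases) auto
    qed
  qed simp
  also have "\<dots> = col_prefix_sum mu k" by (simp add: col_prefix_sum_eq_sum_min)
  finally show ?thesis .
qed

lemma nat_eqI_less_iff:
  fixes a b :: nat
  assumes "\<And>i. i < a \<longleftrightarrow> i < b"
  shows "a = b"
  using assms[of a] assms[of b] by linarith

lemma partition_eqI_col_length:
  assumes la: "is_partition n la" and mu: "is_partition m mu"
    and col_eq: "\<And>j. col_length la j = col_length mu j"
  shows "la = mu"
proof -
  have sorted: "sorted_wrt (\<ge>) xs" if "is_partition k xs" for k xs
    using that by (simp add: is_partition_def)
  have length_eq: "col_length xs 0 = length xs" if "is_partition k xs" for k xs
  proof (rule nat_eqI_less_iff)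
    have "xs ! i \<noteq> 0" if "i < length xs" for i
    proof
      assume "xs ! i = 0"
      then have "0 \<in> set xs" using nth_mem[OF that] by simp
      then show False using \<open>is_partition k xs\<close> by (simp add: is_partition_def)
    qed
    then show "i < col_length xs 0 \<longleftrightarrow> i < length xs" for i
      using col_length_less_iff[OF sorted[OF that]] by auto
  qed
  have len: "length la = length mu" using length_eq[OF la] length_eq[OF mu] col_eq[of 0] by simp
  show ?thesis
  proof (rule nth_equalityI[OF len])
    fix i assume i: "i < length la"
    show "la ! i = mu ! i"
    proof (rule nat_eqI_less_iff)
      fix j
      show "j < la ! i \<longleftrightarrow> j < mu ! i"
        using col_length_less_iff[OF sorted[OF la], of i j] col_length_less_iff[OF sorted[OF mu], of i j]
          col_eq[of j] i len by simp
    qed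
  qed
qed

theorem proposition3p10:
  fixes n :: nat and la mu :: "nat list"
  assumes "is_partition n la" and "is_partition n mu" and "la \<noteq> mu"
  shows "sign_signature n (specht n la) \<noteq> sign_signature n (specht n mu)"
proof
  assume eq: "sign_signature n (specht n la) = sign_signature n (specht n mu)"
  have "parabolic (col_gens n la) \<in> sign_signature n (specht n mu)"
    using parabolic_col_gens_mem_sign_signature[OF assms(1)] eq by simp
  moreover have "parabolic (col_gens n mu) \<in> sign_signature n (specht n la)"
    using parabolic_col_gens_mem_sign_signature[OF assms(2)] eq by simp
  ultimately have prefix_eq: "col_prefix_sum la k = col_prefix_sum mu k" for k
    using col_prefix_sum_le_if_mem_sign_signature[OF assms(1)]
      col_prefix_sum_le_if_mem_sign_signature[OF assms(2)] by (blast intro: antisym)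
  have "col_length la j = col_length mu j" for j
    using prefix_eq[of j] prefix_eq[of "Suc j"] by (simp add: col_prefix_sum_Suc)
  then show False using partition_eqI_col_length[OF assms(1,2)] assms(3) by blast
qed

end
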